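(* Let $m\ge2$, $K$ an algebraic number field, $a(z)\in K[z]$ monic of degree $m$, $b(z)\in K[z]$ of degree $\le m-1$ with $z^{m-1}$-coefficient $b_{m-1}$, with $a(z)=\prod_{i=1}^m(z-\alpha_i)$, $\alpha_i\in K$ pairwise distinct, $s_i:=b(\alpha_i)/a'(\alpha_i)\in\mathbb{Q}\setminus\mathbb{Z}_{\le-1}$, $b_{m-1}\notin\mathbb{Z}_{<-1}$, and let $L=-a(z)\frac{d}{dz}+b(z)$. Let $f(z)=\sum_{k=0}^\infty f_k/z^{k+1}\in K[[1/z]]$ satisfy $L\cdot f(z)\in K[z]$. Then there exists a positive integer $D$ depending only on $f$ such that for every non-Archimedean place $v$ of $K$ and every positive integer $n$, \[\max_{0\le k\le n}\{|f_k|_v\}\le|D|_v^{-1}\,\mathrm{H}_v(\boldsymbol\alpha)^n\prod_{i=1}^m|\mu_n(s_i)|_v^{-1}\cdot|d_n(b_{m-1})|_v^{-1}.\]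
   Context: $L\cdot f=-af'+bf$ with termwise differentiation. Absolute values normalized: $|p|_v=p^{-[K_v:\mathbb{Q}_p]/[K:\mathbb{Q}]}$ for $v\mid p$. $\boldsymbol\alpha=(\alpha_1,\ldots,\alpha_m)$ and $\mathrm{H}_v(\boldsymbol\alpha)=\max\{1,|\alpha_1|_v,\ldots,|\alpha_m|_v\}$. For $s\in\mathbb{Q}$, $\mu_n(s)=\mathrm{den}(s)^n\prod_{q\text{ prime},\,q\mid\mathrm{den}(s)}q^{\lfloor n/(q-1)\rfloor}$; for $b\in\mathbb{Q}\setminus\mathbb{Z}_{\le-1}$, $d_n(b)$ is the least positive integer $d$ with $d/(b+i)\in\mathbb{Z}$ for $1\le i\le n+1$. *)

theory Defs
  imports "HOL-Computational_Algebra.Computational_Algebra"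
begin

definition number_field :: "'a::field_char_0 itself \<Rightarrow> bool" where
  "number_field _ \<longleftrightarrow>
     (\<exists>B::'a set. finite B \<and> (\<forall>x::'a. \<exists>c::'a \<Rightarrow> rat. x = (\<Sum>e\<in>B. of_rat (c e) * e)))"

definition nonarch_abs :: "('a::field \<Rightarrow> real) \<Rightarrow> bool" where
  "nonarch_abs v \<longleftrightarrow>
     (\<forall>x. 0 \<le> v x) \<and> (\<forall>x. v x = 0 \<longleftrightarrow> x = 0) \<and>
     (\<forall>x y. v (x * y) = v x * v y) \<and>
     (\<forall>x y. v (x + y) \<le> max (v x) (v y)) \<and>
     (\<exists>x. x \<noteq> 0 \<and> v x \<noteq> 1)"

text \<open>Coefficient of z^(-N-1) in L f = -a f' + b f, where f = sum_k f_k / z^(k+1),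
  differentiated termwise.\<close>
definition L_coeff :: "'a::field_char_0 poly \<Rightarrow> 'a poly \<Rightarrow> (nat \<Rightarrow> 'a) \<Rightarrow> nat \<Rightarrow> 'a" where
  "L_coeff a b f N =
     (\<Sum>j\<le>degree a. of_nat (j + N) * coeff a j * f (j + N - 1)) +
     (\<Sum>j\<le>degree b. coeff b j * f (j + N))"

definition L_image_poly :: "'a::field_char_0 poly \<Rightarrow> 'a poly \<Rightarrow> (nat \<Rightarrow> 'a) \<Rightarrow> bool" where
  "L_image_poly a b f \<longleftrightarrow> (\<forall>N. L_coeff a b f N = 0)"

definition den_rat :: "rat \<Rightarrow> nat" where
  "den_rat s = nat (snd (quotient_of s))"

definition mu :: "nat \<Rightarrow> rat \<Rightarrow> nat" where
  "mu n s = den_rat s ^ n * (\<Prod>q\<in>{q. prime q \<and> q dvd den_rat s}. q ^ (n div (q - 1)))"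

definition dn :: "nat \<Rightarrow> rat \<Rightarrow> nat" where
  "dn n b = (LEAST d::nat. 0 < d \<and> (\<forall>i\<in>{1..n+1}. of_nat d / (b + of_nat i) \<in> \<int>))"

definition height_v :: "('a \<Rightarrow> real) \<Rightarrow> nat \<Rightarrow> (nat \<Rightarrow> 'a) \<Rightarrow> real" where
  "height_v v m \<alpha> = Max (insert 1 ((\<lambda>i. v (\<alpha> i)) ` {1..m}))"

end

theory Submission
  imports Defs "HOL-Number_Theory.Cong"
begin

text \<open>Put \<open>x = 1/z\<close> and let \<open>A\<close>, \<open>B\<close> be the reversals of \<open>a\<close>, \<open>b\<close>. Then \<open>F(x) = f(1/x)\<close> satisfies
  \<open>x A F' + B F = \<Phi>\<close> with \<open>\<Phi>\<close> a polynomial, while \<open>Y = \<Prod> (1 - \<alpha>\<^sub>i x)\<^bsup>s\<^sub>i\<^esup>\<close> satisfies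
  \<open>x A Y' + B Y = b\<^sub>m\<^sub>-\<^sub>1 A Y\<close>. Hence \<open>J = F/Y\<close> solves \<open>(b\<^sub>m\<^sub>-\<^sub>1 + n) J\<^sub>n = (G \<Phi>)\<^sub>n\<close> with
  \<open>G = 1/(A Y) = \<Prod> (1 - \<alpha>\<^sub>i x)\<^bsup>-1-s\<^sub>i\<^esup>\<close>, and \<open>f\<^sub>k\<close> is a coefficient of \<open>Y J\<close>. The coefficients of
  \<open>Y\<close> and \<open>G\<close> are \<open>\<alpha>\<^sub>i\<^sup>n\<close> times binomial coefficients of \<open>s\<^sub>i\<close> resp. \<open>-1-s\<^sub>i\<close>, whose denominators
  divide \<open>\<mu>\<^sub>n(s\<^sub>i)\<close>; dividing by \<open>b\<^sub>m\<^sub>-\<^sub>1 + n\<close> costs \<open>d\<^sub>n(b\<^sub>m\<^sub>-\<^sub>1)\<close>. Since \<open>\<mu>\<^sub>k \<mu>\<^sub>l\<close> divides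
  \<open>\<mu>\<^sub>k\<^sub>+\<^sub>l\<close> and \<open>v\<close> is ultrametric, these bounds survive products of series, and the finitely
  many algebraic numbers \<open>\<Phi>\<^sub>1, \<dots>, \<Phi>\<^sub>m\<^sub>-\<^sub>1, J\<^sub>1\<close> have a common denominator \<open>D\<close>.\<close>

section \<open>Non-Archimedean absolute values\<close>

context
  fixes v :: "'a::field \<Rightarrow> real"
  assumes v: "nonarch_abs v"
begin

lemma nonarch_abs_nonneg: "0 \<le> v x"
  using v unfolding nonarch_abs_def by blast

lemma nonarch_abs_eq_0_iff: "v x = 0 \<longleftrightarrow> x = 0"
  using v unfolding nonarch_abs_def by blast

lemma nonarch_abs_pos: "x \<noteq> 0 \<Longrightarrow> 0 < v x"
  using nonarch_abs_nonneg[of x] nonarch_abs_eq_0_iff[of x] by linarith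

lemma nonarch_abs_mult: "v (x * y) = v x * v y"
  using v unfolding nonarch_abs_def by blast

lemma nonarch_abs_add_le: "v (x + y) \<le> max (v x) (v y)"
  using v unfolding nonarch_abs_def by blast

lemma nonarch_abs_zero [simp]: "v 0 = 0"
  by (simp add: nonarch_abs_eq_0_iff)

lemma nonarch_abs_one [simp]: "v 1 = 1"
  using nonarch_abs_mult[of 1 1] nonarch_abs_pos[of 1] by simp

lemma nonarch_abs_minus [simp]: "v (- x) = v x"
proof -
  have "v (- 1) * v (- 1) = 1"
    using nonarch_abs_mult[of "- 1" "- 1"] by simp
  then have "v (- 1) = 1"
    using nonarch_abs_nonneg[of "- 1"] by (metis abs_of_nonneg abs_square_eq_1 power2_eq_square)
  then show ?thesis
    using nonarch_abs_mult[of "- 1" x] by simp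
qed

lemma nonarch_abs_power: "v (x ^ n) = v x ^ n"
  by (induction n) (simp_all add: nonarch_abs_mult)

lemma nonarch_abs_sum_le:
  assumes "0 \<le> B" and "\<And>i. i \<in> A \<Longrightarrow> v (f i) \<le> B"
  shows "v (sum f A) \<le> B"
  using assms(2)
proof (induction A rule: infinite_finite_induct)
  case (insert x F)
  have "v (sum f (insert x F)) = v (f x + sum f F)"
    using insert.hyps by simp
  also have "\<dots> \<le> max (v (f x)) (v (sum f F))"
    by (rule nonarch_abs_add_le)
  also have "\<dots> \<le> B"
    using insert.IH insert.prems by simp
  finally show ?case .
qed (use assms(1) in simp_all)

lemma nonarch_abs_of_nat_le_1: "v (of_nat n) \<le> 1"
proof (induction n)
  case (Suc n)
  then show ?case
    using nonarch_abs_add_le[of 1 "of_nat n"] by simp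
qed simp

lemma nonarch_abs_Ints_le_1:
  assumes "x \<in> \<int>"
  shows "v x \<le> 1"
proof -
  obtain n :: nat where "x = of_nat n \<or> x = - of_nat n"
    using assms by (metis Ints_cases int_cases2 of_int_minus of_int_of_nat_eq)
  then show ?thesis
    using nonarch_abs_of_nat_le_1[of n] by auto
qed

lemma nonarch_abs_le_inverse:
  assumes "d \<noteq> 0" and "v (d * x) \<le> 1"
  shows "v x \<le> inverse (v d)"
  using assms nonarch_abs_pos[of d] by (simp add: nonarch_abs_mult field_simps)

end

context
  fixes v :: "'a::field_char_0 \<Rightarrow> real"
  assumes v: "nonarch_abs v"
begin

lemma one_le_inverse_nonarch_abs_of_nat: "n > 0 \<Longrightarrow> 1 \<le> inverse (v (of_nat n))"
  using nonarch_abs_pos[OF v, of "of_nat n"] nonarch_abs_of_nat_le_1[OF v, of n] by (simp add: one_le_inverse)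

lemma nonarch_abs_le_inverse_of_nat:
  assumes "n > 0" and "of_nat n * x \<in> \<int>"
  shows "v x \<le> inverse (v (of_nat n))"
  using assms by (intro nonarch_abs_le_inverse[OF v] nonarch_abs_Ints_le_1[OF v]) simp_all

end

section \<open>Denominators of algebraic numbers\<close>

lemma nonarch_abs_le_1_if_integral:
  assumes v: "nonarch_abs v"
    and eq: "y ^ r = (\<Sum>i<r. c i * y ^ i)" and c: "\<And>i. i < r \<Longrightarrow> v (c i) \<le> 1"
  shows "v y \<le> 1"
proof (rule ccontr)
  assume "\<not> v y \<le> 1"
  then have big: "1 < v y" by simp
  have "r \<noteq> 0"
    using eq by (intro notI) simp
  have "v y ^ r = v (\<Sum>i<r. c i * y ^ i)"
    by (metis eq nonarch_abs_power[OF v])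
  also have "\<dots> \<le> v y ^ (r - 1)"
  proof (rule nonarch_abs_sum_le[OF v])
    fix i assume i: "i \<in> {..<r}"
    have "v (c i * y ^ i) \<le> 1 * v y ^ i"
      unfolding nonarch_abs_mult[OF v] nonarch_abs_power[OF v]
      using c[of i] i big by (intro mult_mono) auto
    also have "\<dots> \<le> v y ^ (r - 1)"
      using i big by (simp add: power_increasing)
    finally show "v (c i * y ^ i) \<le> v y ^ (r - 1)" .
  qed (use big in simp)
  also have "\<dots> < v y ^ r"
    using big \<open>r \<noteq> 0\<close> by (simp add: power_strict_increasing)
  finally show False by simp
qed

text \<open>If \<open>c\<close> is the leading coefficient of \<open>p\<close>, then \<open>c x\<close> is a root of the monic polynomial
  \<open>c\<^sup>r\<^sup>-\<^sup>1 p(X / c)\<close>.\<close>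
lemma power_lead_coeff_mult_root:
  fixes p :: "'a::comm_ring_1 poly"
  assumes px: "poly p x = 0" and r: "degree p = r" "r \<noteq> 0"
  defines "c \<equiv> lead_coeff p"
  shows "(c * x) ^ r = (\<Sum>i<r. (- (coeff p i * c ^ (r - 1 - i))) * (c * x) ^ i)"
proof -
  define y where "y = c * x"
  have lower: "c ^ (r - 1) * (coeff p i * x ^ i) = coeff p i * c ^ (r - 1 - i) * y ^ i"
    if "i < r" for i
  proof -
    have "c ^ (r - 1) = c ^ (r - 1 - i) * c ^ i"
      using that by (simp add: power_add[symmetric])
    then show ?thesis by (simp add: y_def power_mult_distrib)
  qed
  have "c ^ (r - 1) * (coeff p r * x ^ r) = (c ^ (r - 1) * c) * x ^ r"
    by (simp add: c_def r mult.assoc)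
  also have "\<dots> = y ^ r"
    using r(2) by (simp add: y_def power_mult_distrib flip: power_Suc2)
  finally have top: "c ^ (r - 1) * (coeff p r * x ^ r) = y ^ r" .
  have "0 = c ^ (r - 1) * poly p x"
    using px by simp
  also have "\<dots> = (\<Sum>i<r. c ^ (r - 1) * (coeff p i * x ^ i)) + c ^ (r - 1) * (coeff p r * x ^ r)"
    by (simp add: poly_altdef r(1) lessThan_Suc_atMost[symmetric] distrib_left sum_distrib_left)
  also have "\<dots> = (\<Sum>i<r. coeff p i * c ^ (r - 1 - i) * y ^ i) + y ^ r"
  proof -
    have "(\<Sum>i<r. c ^ (r - 1) * (coeff p i * x ^ i)) = (\<Sum>i<r. coeff p i * c ^ (r - 1 - i) * y ^ i)"
      by (rule sum.cong[OF refl lower]) simp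
    then show ?thesis
      by (simp only: top)
  qed
  finally show ?thesis
    by (simp add: y_def sum_negf eq_neg_iff_add_eq_0 add.commute)
qed

lemma algebraic_imp_uniform_denominator:
  fixes x :: "'a::field_char_0"
  assumes "algebraic x"
  shows "\<exists>N::nat. N > 0 \<and> (\<forall>v. nonarch_abs v \<longrightarrow> v (of_nat N * x) \<le> 1)"
proof -
  obtain p where pZ: "\<And>i. coeff p i \<in> \<int>" and "p \<noteq> 0" and px: "poly p x = 0"
    using assms unfolding algebraic_def by blast
  obtain k where k: "lead_coeff p = of_int k"
    using pZ[of "degree p"] by (auto elim: Ints_cases)
  have "k \<noteq> 0"
    using \<open>p \<noteq> 0\<close> k by (metis leading_coeff_0_iff of_int_0)
  have "degree p \<noteq> 0"
  proof
    assume "degree p = 0"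
    then have "poly p x = lead_coeff p"
      by (metis degree_0_id poly_const_conv)
    then show False
      using px k \<open>k \<noteq> 0\<close> by simp
  qed
  have y: "v (lead_coeff p * x) \<le> 1" if v: "nonarch_abs v" for v
    by (rule nonarch_abs_le_1_if_integral[OF v power_lead_coeff_mult_root[OF px refl \<open>degree p \<noteq> 0\<close>]])
      (use pZ k in \<open>auto intro!: nonarch_abs_Ints_le_1[OF v]\<close>)
  have "of_nat (nat \<bar>k\<bar>) * x = lead_coeff p * x \<or> of_nat (nat \<bar>k\<bar>) * x = - (lead_coeff p * x)"
    by (cases "k \<ge> 0") (simp_all add: k)
  then show ?thesis
    using y \<open>k \<noteq> 0\<close> by (intro exI[of _ "nat \<bar>k\<bar>"]) auto
qed

lemma algebraic_if_rational_relation: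
  fixes x :: "'a::field_char_0" and u :: "nat \<Rightarrow> rat"
  assumes "finite I" and "(\<Sum>i\<in>I. of_rat (u i) * x ^ i) = 0" and "j \<in> I" and "u j \<noteq> 0"
  shows "algebraic x"
proof (rule algebraicI')
  define p where "p = (\<Sum>i\<in>I. monom (of_rat (u i) :: 'a) i)"
  have cp: "coeff p k = (if k \<in> I then of_rat (u k) else 0)" for k
    using assms(1) by (simp add: p_def coeff_sum coeff_monom)
  show "coeff p k \<in> \<rat>" for k
    by (simp add: cp)
  show "p \<noteq> 0"
    using cp[of j] assms(3,4) by auto
  show "poly p x = 0"
    using assms(2) by (simp add: p_def poly_sum poly_monom)
qed

lemma number_field_algebraic:
  assumes "number_field TYPE('a::field_char_0)"
  shows "algebraic (x::'a)"
proof -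
  obtain B :: "'a set" where "finite B"
    and spans: "\<And>y. \<exists>c::'a \<Rightarrow> rat. y = (\<Sum>e\<in>B. of_rat (c e) * e)"
    using assms unfolding number_field_def by blast
  interpret vs: vector_space "\<lambda>r (y::'a). of_rat r * y"
    by unfold_locales (simp_all add: algebra_simps of_rat_add of_rat_mult)
  have span: "y \<in> vs.span B" for y
  proof -
    obtain c where "y = (\<Sum>e\<in>B. of_rat (c e) * e)"
      using spans by blast
    also have "\<dots> \<in> vs.span B"
      by (intro vs.span_sum vs.span_scale vs.span_base)
    finally show ?thesis .
  qed
  define n where "n = card B"
  show ?thesis
  proof (cases "inj_on (\<lambda>i. x ^ i) {0..n}")
    case False
    then obtain i j where "i \<noteq> j" "x ^ i = x ^ j"
      unfolding inj_on_def by blast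
    then show ?thesis
      by (intro algebraic_if_rational_relation[of "{i, j}" "\<lambda>l. if l = i then 1 else - 1" x i]) auto
  next
    case True
    define S where "S = (\<lambda>i. x ^ i) ` {0..n}"
    have "vs.dependent S"
    proof (rule ccontr)
      assume "\<not> vs.dependent S"
      then have "card S \<le> card B"
        using vs.independent_span_bound[OF \<open>finite B\<close>] span by blast
      then show False
        using True by (simp add: S_def card_image n_def)
    qed
    then obtain u where u: "\<exists>w\<in>S. u w \<noteq> 0" "(\<Sum>w\<in>S. of_rat (u w) * w) = 0"
      using vs.dependent_finite[of S] by (auto simp: S_def)
    then obtain j where "j \<le> n" "u (x ^ j) \<noteq> 0"
      by (auto simp: S_def)
    moreover have "(\<Sum>i\<in>{0..n}. of_rat (u (x ^ i)) * x ^ i) = 0"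
      using u(2) unfolding S_def by (simp add: sum.reindex[OF True])
    ultimately show ?thesis
      by (intro algebraic_if_rational_relation[of "{0..n}" "\<lambda>i. u (x ^ i)" x j]) auto
  qed
qed

lemma number_field_common_denominator:
  assumes "number_field TYPE('a::field_char_0)" and "finite X"
  shows "\<exists>N::nat. N > 0 \<and> (\<forall>v. nonarch_abs v \<longrightarrow> (\<forall>x::'a\<in>X. v (of_nat N * x) \<le> 1))"
  using assms(2)
proof (induction X rule: finite_induct)
  case (insert x X)
  obtain N where N: "N > 0" "\<forall>v. nonarch_abs v \<longrightarrow> (\<forall>x\<in>X. v (of_nat N * x) \<le> 1)"
    using insert.IH by blast
  obtain M where M: "M > 0" "\<forall>v. nonarch_abs v \<longrightarrow> v (of_nat M * x) \<le> 1"
    using algebraic_imp_uniform_denominator[OF number_field_algebraic[OF assms(1)]] by blast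
  have "v (of_nat (M * N) * y) \<le> 1"
    if "nonarch_abs v" "y \<in> insert x X" for v y
  proof -
    note le_1 = nonarch_abs_of_nat_le_1[OF that(1)] and nonneg = nonarch_abs_nonneg[OF that(1)]
    have "v (of_nat (M * N) * y) = v (of_nat N) * v (of_nat M * y)"
         "v (of_nat (M * N) * y) = v (of_nat M) * v (of_nat N * y)"
      by (simp_all add: nonarch_abs_mult[OF that(1), symmetric] algebra_simps)
    then show ?thesis
      using that(2)
    proof (elim insertE)
      assume "y = x"
      then show ?thesis
        unfolding \<open>v (of_nat (M * N) * y) = v (of_nat N) * v (of_nat M * y)\<close>
        using M(2) that(1) le_1 nonneg by (simp add: mult_le_one)
    next
      assume "y \<in> X"
      then show ?thesis
        unfolding \<open>v (of_nat (M * N) * y) = v (of_nat M) * v (of_nat N * y)\<close>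
        using N(2) that(1) le_1 nonneg by (simp add: mult_le_one)
    qed
  qed
  then show ?case
    using M N by (intro exI[of _ "M * N"]) auto
qed auto

section \<open>Denominators of binomial coefficients\<close>

lemma multiplicity_fact_nat:
  assumes l: "prime (l::nat)"
  shows "multiplicity l (fact k :: nat) = k div l + multiplicity l (fact (k div l) :: nat)"
proof (induction k)
  case (Suc k)
  have "l > 1"
    using l prime_gt_1_nat by auto
  have step: "multiplicity l (fact (Suc j) :: nat) = multiplicity l (Suc j) + multiplicity l (fact j :: nat)" for j
    unfolding fact_Suc of_nat_id by (rule prime_elem_multiplicity_mult_distrib) (use l in auto)
  show ?case
  proof (cases "l dvd Suc k")
    case False
    then have "Suc k div l = k div l"
      by (simp add: div_Suc dvd_eq_mod_eq_0)
    then show ?thesis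
      using step[of k] Suc.IH not_dvd_imp_multiplicity_0[OF False] by simp
  next
    case True
    then obtain t where t: "Suc k = l * t" and "t \<ge> 1"
      by (metis dvdE less_one not_less mult_0_right nat.distinct(1))
    moreover have "Suc k div l = Suc (k div l)"
      using True by (simp add: div_Suc dvd_eq_mod_eq_0)
    ultimately have "Suc k div l = t" and "k div l = t - 1"
      using \<open>l > 1\<close> by auto
    moreover have "multiplicity l (Suc k) = Suc (multiplicity l t)"
      unfolding t by (rule multiplicity_times_same) (use \<open>t \<ge> 1\<close> l in auto)
    moreover have "multiplicity l (fact t :: nat) = multiplicity l t + multiplicity l (fact (t - 1) :: nat)"
      using step[of "t - 1"] \<open>t \<ge> 1\<close> by simp
    ultimately show ?thesis
      using step[of k] Suc.IH \<open>t \<ge> 1\<close> by simp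
  qed
qed simp

lemma multiplicity_fact_times_le:
  assumes l: "prime (l::nat)"
  shows "multiplicity l (fact k :: nat) * (l - 1) \<le> k"
proof (induction k rule: less_induct)
  case (less k)
  show ?case
  proof (cases "k = 0")
    case False
    define t where "t = k div l"
    have "l > 1"
      using l prime_gt_1_nat by auto
    then have "multiplicity l (fact t :: nat) * (l - 1) \<le> t"
      using less False by (simp add: t_def)
    then have "multiplicity l (fact k :: nat) * (l - 1) \<le> t * (l - 1) + t"
      using multiplicity_fact_nat[OF l, of k] by (simp add: t_def algebra_simps)
    also have "\<dots> \<le> k"
      using \<open>l > 1\<close> by (simp add: t_def algebra_simps)
    finally show ?thesis .
  qed simp
qed

lemma prime_power_dvd_fact_imp_le:
  assumes l: "prime (l::nat)" and "l ^ e dvd fact k"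
  shows "e \<le> k div (l - 1)"
proof -
  have "e \<le> multiplicity l (fact k :: nat)"
    by (rule multiplicity_geI) (use assms in auto)
  then have "e * (l - 1) \<le> k"
    using multiplicity_fact_times_le[OF l, of k] by (meson le_trans mult_le_mono1)
  then show ?thesis
    using l prime_gt_1_nat by (simp add: less_eq_div_iff_mult_less_eq)
qed

lemma fact_dvd_prod_diff: "(fact k :: int) dvd (\<Prod>i=0..<k. N - int i)"
proof -
  have "(\<Prod>i=0..<k. N - int i) = (-1) ^ k * pochhammer (- N) k"
    by (induction k) (simp_all add: pochhammer_Suc algebra_simps)
  then show ?thesis
    using fact_dvd_pochhammer[of k "- N"] by simp
qed

text \<open>Inverting \<open>d\<close> modulo \<open>M\<close> turns the progression into \<open>d\<^sup>k\<close> times \<open>k\<close> consecutive integers.\<close>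
lemma dvd_prod_progression_if_coprime:
  fixes p d M :: int
  assumes "coprime d M" and "M dvd fact k"
  shows "M dvd (\<Prod>i=0..<k. p - int i * d)"
proof -
  obtain x where x: "[d * x = 1] (mod M)"
    using cong_solve_coprime_int[OF assms(1)] by blast
  have "[(\<Prod>i=0..<k. p - int i * d) = (\<Prod>i=0..<k. d * (x * p - int i))] (mod M)"
  proof (rule cong_prod)
    fix i
    have "[d * (x * p) = p] (mod M)"
      using cong_scalar_right[OF x, of p] by (simp add: mult.assoc)
    then show "[p - int i * d = d * (x * p - int i)] (mod M)"
      by (simp add: cong_sym right_diff_distrib cong_diff mult.commute)
  qed
  moreover have "M dvd (\<Prod>i=0..<k. d * (x * p - int i))"
    using dvd_trans[OF assms(2) fact_dvd_prod_diff] by (simp add: prod.distrib)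
  ultimately show ?thesis
    using cong_dvd_iff by blast
qed

definition mu_prime_part :: "nat \<Rightarrow> nat \<Rightarrow> nat" where
  "mu_prime_part k d = (\<Prod>q\<in>{q. prime q \<and> q dvd d}. q ^ (k div (q - 1)))"

lemma mu_eq: "mu k s = den_rat s ^ k * mu_prime_part k (den_rat s)"
  by (simp add: mu_def mu_prime_part_def)

lemma den_rat_pos: "den_rat s > 0"
  unfolding den_rat_def using quotient_of_denom_pos'[of s] by simp

lemma prime_power_dvd_mu_prime_part:
  fixes l d :: int
  assumes l: "prime l" and "l dvd d" and "d > 0" and "l ^ e dvd fact k"
  shows "l ^ e dvd int (mu_prime_part k (nat d))"
proof -
  have l_nat: "l = int (nat l)"
    using prime_gt_0_int[OF l] by simp
  then have "prime (nat l)" and "nat l dvd nat d"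
    using assms(1-3) by (metis prime_int_nat_transfer, metis int_dvd_int_iff nat_0_le order_less_imp_le)
  have "nat l ^ e dvd fact k"
    using assms(4) l_nat by (metis int_dvd_int_iff of_nat_fact of_nat_power)
  then have "nat l ^ e dvd nat l ^ (k div (nat l - 1))"
    using prime_power_dvd_fact_imp_le[OF \<open>prime (nat l)\<close>] by (intro le_imp_power_dvd)
  also have "\<dots> dvd mu_prime_part k (nat d)"
    unfolding mu_prime_part_def using \<open>prime (nat l)\<close> \<open>nat l dvd nat d\<close> \<open>d > 0\<close>
    by (intro dvd_prodI) (auto intro: finite_divisors_nat)
  finally show ?thesis
    using l_nat by (metis int_dvd_int_iff of_nat_power)
qed

lemma fact_dvd_mu_prime_part_mult_prod:
  fixes p d :: int
  assumes "d > 0"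
  shows "fact k dvd int (mu_prime_part k (nat d)) * (\<Prod>i=0..<k. p - int i * d)"
    (is "_ dvd ?Q * ?P")
proof (cases "?Q * ?P = 0")
  case True
  then show ?thesis
    by (simp only: dvd_0_right)
next
  case False
  show ?thesis
  proof (rule multiplicity_le_imp_dvd)
    fix l :: int
    assume l: "prime l"
    define e where "e = multiplicity l (fact k :: int)"
    have "l ^ e dvd ?Q * ?P"
    proof (cases "l dvd d")
      case True
      then have "l ^ e dvd ?Q"
        unfolding e_def using assms l multiplicity_dvd by (intro prime_power_dvd_mu_prime_part) auto
      then show ?thesis by simp
    next
      case False
      then have "coprime d (l ^ e)"
        using l by (metis coprime_commute coprime_power_right_iff prime_imp_coprime)
      then show ?thesis
        using dvd_prod_progression_if_coprime multiplicity_dvd e_def by (metis dvd_mult)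
    qed
    then show "multiplicity l (fact k :: int) \<le> multiplicity l (?Q * ?P)"
      unfolding e_def using multiplicity_geI[OF False] l not_prime_unit by blast
  qed simp
qed

lemma mu_mult_gbinomial_Ints: "of_nat (mu k s) * (s gchoose k) \<in> \<int>"
proof -
  obtain p d where pd: "quotient_of s = (p, d)"
    by (cases "quotient_of s") auto
  have "d > 0" and s: "s = of_int p / of_int d"
    using quotient_of_denom_pos[OF pd] quotient_of_div[OF pd] by auto
  define Q where "Q = int (mu_prime_part k (nat d))"
  define P where "P = (\<Prod>i=0..<k. p - int i * d)"
  obtain z where z: "Q * P = fact k * z"
    using fact_dvd_mu_prime_part_mult_prod[OF \<open>d > 0\<close>, of k p] by (auto simp: Q_def P_def)
  have "fact k * (s gchoose k) = (\<Prod>i=0..<k. of_int (p - int i * d) / of_int d)"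
    unfolding gbinomial_mult_fact
    by (rule prod.cong) (use \<open>d > 0\<close> in \<open>auto simp: s field_simps\<close>)
  also have "\<dots> = of_int P / of_int d ^ k"
    by (simp add: P_def prod_dividef)
  finally have "of_int d ^ k * (s gchoose k) = of_int P / fact k"
    using \<open>d > 0\<close> by (simp add: field_simps)
  moreover have "mu k s = nat d ^ k * nat Q"
    using pd by (simp add: mu_eq den_rat_def Q_def)
  ultimately have "of_nat (mu k s) * (s gchoose k) = of_int (Q * P) / fact k"
    using \<open>d > 0\<close> by (simp add: Q_def field_simps)
  also have "\<dots> = of_int z"
    unfolding z by (simp add: of_int_fact)
  finally show ?thesis by simp
qed

lemma mu_pos: "mu k s > 0"
  unfolding mu_eq mu_prime_part_def using den_rat_pos[of s]
  by (auto intro!: prod_pos dest: prime_gt_0_nat)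

lemma mu_mult_dvd:
  assumes "l + k \<le> n"
  shows "mu l s * mu k s dvd mu n s"
proof -
  define d where "d = den_rat s"
  have "d ^ l * d ^ k dvd d ^ n"
    using assms by (simp add: power_add[symmetric] le_imp_power_dvd)
  moreover have "mu_prime_part l d * mu_prime_part k d dvd mu_prime_part n d"
    unfolding mu_prime_part_def prod.distrib[symmetric]
  proof (rule prod_dvd_prod)
    fix q
    have "l div (q - 1) + k div (q - 1) \<le> n div (q - 1)"
      using div_add1_eq[of l k "q - 1"] div_le_mono[OF assms, of "q - 1"] by linarith
    then show "q ^ (l div (q - 1)) * q ^ (k div (q - 1)) dvd q ^ (n div (q - 1))"
      by (simp add: le_imp_power_dvd flip: power_add)
  qed
  ultimately show ?thesis
    unfolding mu_eq d_def[symmetric] by (metis mult.assoc mult.left_commute mult_dvd_mono)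
qed

lemma den_rat_of_int_diff: "den_rat (of_int z - s) = den_rat s"
proof -
  obtain p q where pq: "quotient_of s = (p, q)"
    by (cases "quotient_of s") auto
  have "q > 0" and "coprime p q" and s: "s = of_int p / of_int q"
    using quotient_of_denom_pos[OF pq] quotient_of_coprime[OF pq] quotient_of_div[OF pq] by auto
  have "gcd q (z * q + - p) = 1"
    using \<open>coprime p q\<close> by (simp only: gcd_add_mult) (simp add: coprime_iff_gcd_eq_1 gcd.commute)
  then have "coprime (z * q - p) q"
    by (simp add: coprime_iff_gcd_eq_1 gcd.commute)
  moreover have "of_int z - s = Rat.Fract (z * q - p) q"
    using \<open>q > 0\<close> by (simp add: s Fract_of_int_quotient field_simps)
  ultimately have "quotient_of (of_int z - s) = (z * q - p, q)"
    using \<open>q > 0\<close> by (simp add: quotient_of_Fract)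
  then show ?thesis
    using pq by (simp add: den_rat_def)
qed

lemma mu_minus_one_minus: "mu n (- 1 - s) = mu n s"
  using den_rat_of_int_diff[of "- 1" s] by (simp add: mu_def)

lemma dn_exists:
  fixes b :: rat
  shows "\<exists>d::nat. 0 < d \<and> (\<forall>i\<in>{1..n+1}. of_nat d / (b + of_nat i) \<in> \<int>)"
proof -
  define num where "num i = nat \<bar>fst (quotient_of (b + of_nat i))\<bar>" for i :: nat
  define d where "d = (\<Prod>i\<in>{1..n+1}. max 1 (num i))"
  have "of_nat d / (b + of_nat i) \<in> \<int>" if i: "i \<in> {1..n+1}" for i
  proof (cases "b + of_nat i = 0")
    case False
    obtain p q where pq: "quotient_of (b + of_nat i) = (p, q)"
      by (cases "quotient_of (b + of_nat i)") auto
    then have bi: "b + of_nat i = of_int p / of_int q" and "q > 0"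
      using quotient_of_div quotient_of_denom_pos by blast+
    then have "p \<noteq> 0"
      using False by auto
    have "max 1 (num i) dvd d"
      unfolding d_def using i by (intro dvd_prodI) auto
    moreover have "max 1 (num i) = nat \<bar>p\<bar>"
      using \<open>p \<noteq> 0\<close> pq by (simp add: num_def)
    ultimately obtain r where "d = nat \<bar>p\<bar> * r"
      by (metis dvdE)
    then have "of_nat d / (b + of_nat i) = of_int (sgn p * q * int r)"
      unfolding bi using \<open>q > 0\<close> \<open>p \<noteq> 0\<close> by (cases "p > 0") (simp_all add: field_simps)
    then show ?thesis by simp
  qed simp
  moreover have "0 < d"
    unfolding d_def by (rule prod_pos) simp
  ultimately show ?thesis by blast
qed

lemma dn_pos: "0 < dn n b"
  and dn_divide_Ints: "i \<in> {1..n+1} \<Longrightarrow> of_nat (dn n b) / (b + of_nat i) \<in> \<int>"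
  using LeastI_ex[OF dn_exists[of n b]] unfolding dn_def by auto

lemma of_rat_gbinomial: "of_rat (s gchoose k) = (of_rat s :: 'a::field_char_0) gchoose k"
proof -
  have "(fact k :: 'a) * of_rat (s gchoose k) = of_rat (fact k * (s gchoose k))"
    by (metis of_rat_mult of_rat_of_nat_eq of_nat_fact)
  also have "\<dots> = fact k * (of_rat s gchoose k)"
    by (simp add: gbinomial_mult_fact of_rat_prod of_rat_diff)
  finally show ?thesis by simp
qed

context
  fixes v :: "'a::field_char_0 \<Rightarrow> real"
  assumes v: "nonarch_abs v"
begin

lemma one_le_inverse_nonarch_abs_mu: "1 \<le> inverse (v (of_nat (mu n s)))"
  by (rule one_le_inverse_nonarch_abs_of_nat[OF v mu_pos])

lemma nonarch_abs_gbinomial_le: "v (of_rat s gchoose k) \<le> inverse (v (of_nat (mu k s)))"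
proof (rule nonarch_abs_le_inverse_of_nat[OF v mu_pos])
  have "(of_nat (mu k s) :: 'a) * (of_rat s gchoose k) = of_rat (of_nat (mu k s) * (s gchoose k))"
    by (simp add: of_rat_mult of_rat_gbinomial)
  then show "(of_nat (mu k s) :: 'a) * (of_rat s gchoose k) \<in> \<int>"
    using mu_mult_gbinomial_Ints[of k s] by (auto elim!: Ints_cases)
qed

lemma nonarch_abs_inverse_shift_le:
  assumes "i \<in> {1..n+1}"
  shows "v (inverse (of_rat b + of_nat i)) \<le> inverse (v (of_nat (dn n b)))"
proof (rule nonarch_abs_le_inverse_of_nat[OF v dn_pos])
  have "(of_nat (dn n b) :: 'a) * inverse (of_rat b + of_nat i) = of_rat (of_nat (dn n b) / (b + of_nat i))"
    by (simp add: of_rat_mult of_rat_add of_rat_inverse divide_inverse)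
  then show "(of_nat (dn n b) :: 'a) * inverse (of_rat b + of_nat i) \<in> \<int>"
    using dn_divide_Ints[OF assms, of b] by (auto elim!: Ints_cases)
qed

lemma inverse_nonarch_abs_mu_mult_le:
  assumes "l + k \<le> n"
  shows "inverse (v (of_nat (mu l s))) * inverse (v (of_nat (mu k s))) \<le> inverse (v (of_nat (mu n s)))"
proof -
  obtain c where c: "mu n s = mu l s * mu k s * c"
    using mu_mult_dvd[OF assms] by blast
  have pos: "0 < v (of_nat (mu j s))" for j
    using nonarch_abs_pos[OF v] mu_pos[of j s] by simp
  have "v (of_nat (mu n s)) \<le> v (of_nat (mu l s)) * v (of_nat (mu k s))"
    using nonarch_abs_of_nat_le_1[OF v, of c] pos[of l] pos[of k]
    by (simp add: c nonarch_abs_mult[OF v] mult_left_le)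
  then show ?thesis
    using pos[of l] pos[of k] pos[of n] by (simp add: field_simps)
qed

end

section \<open>Binomial series and coefficient bounds\<close>

lemma fps_mult_nth_add_degree:
  fixes P Q :: "'a::comm_ring_1 fps"
  assumes "\<And>j. d < j \<Longrightarrow> P $ j = 0"
  shows "(P * Q) $ (n + d) = (\<Sum>j\<le>d. P $ (d - j) * Q $ (n + j))"
proof -
  have "(P * Q) $ (n + d) = (\<Sum>i=0..d. P $ i * Q $ (n + d - i))"
    unfolding fps_mult_nth by (rule sum.mono_neutral_right) (auto simp: assms)
  also have "\<dots> = (\<Sum>j=0..d. P $ (d - j) * Q $ (n + j))"
    by (subst sum.atLeastAtMost_rev) (auto intro!: sum.cong)
  finally show ?thesis
    by (simp add: atLeast0AtMost)
qed

lemma fps_const_sum: "fps_const (\<Sum>i\<in>S. f i) = (\<Sum>i\<in>S. fps_const (f i))"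
  by (induction S rule: infinite_finite_induct) (simp_all flip: fps_const_add)

lemma reflect_poly_linear: "reflect_poly [:- x, 1:] = [:1, - x :: 'a::comm_ring_1:]"
  by (rule poly_eqI) (simp add: coeff_reflect_poly coeff_pCons split: nat.split)

lemma fps_deriv_prod:
  assumes "finite S"
  shows "fps_deriv (\<Prod>i\<in>S. f i) = (\<Sum>i\<in>S. fps_deriv (f i) * (\<Prod>j\<in>S - {i}. f j))"
  using assms
proof (induction S rule: finite_induct)
  case (insert x S)
  have "prod f (insert x S - {i}) = f x * prod f (S - {i})" if "i \<in> S" for i
  proof -
    have "insert x S - {i} = insert x (S - {i})"
      using that insert.hyps by auto
    then show ?thesis
      using insert.hyps by simp
  qed
  then have "(\<Sum>i\<in>insert x S. fps_deriv (f i) * (\<Prod>j\<in>insert x S - {i}. f j))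
      = fps_deriv (f x) * (\<Prod>j\<in>S. f j) + (\<Sum>i\<in>S. fps_deriv (f i) * (f x * (\<Prod>j\<in>S - {i}. f j)))"
    using insert.hyps by (simp add: Diff_insert_absorb)
  also have "\<dots> = fps_deriv (\<Prod>i\<in>insert x S. f i)"
    using insert by (simp add: sum_distrib_left algebra_simps)
  finally show ?case ..
qed simp

lemma fps_XD_nth: "fps_XD F $ n = of_nat n * F $ n"
  by (cases n) (simp_all add: fps_XD_def fps_deriv_nth)

lemma fps_deriv_fps_binomial: "fps_deriv (fps_binomial c) = fps_const c * fps_binomial (c - 1)"
  by (rule fps_ext) (simp add: fps_deriv_nth gbinomial_absorption del: of_nat_Suc)

definition binomial_series :: "'a::field_char_0 \<Rightarrow> 'a \<Rightarrow> 'a fps" where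
  "binomial_series c x = fps_binomial c oo (fps_const (- x) * fps_X)"

lemma binomial_series_nth: "binomial_series c x $ n = (c gchoose n) * (- x) ^ n"
  by (simp add: binomial_series_def fps_compose_linear)

lemma binomial_series_add: "binomial_series c x * binomial_series d x = binomial_series (c + d) x"
  by (simp add: binomial_series_def fps_binomial_add_mult fps_compose_mult_distrib)

lemma binomial_series_0: "binomial_series 0 x = 1"
  by (simp add: binomial_series_def)

lemma binomial_series_1: "binomial_series 1 x = fps_of_poly [:1, - x:]"
  by (simp add: binomial_series_def fps_binomial_1 fps_compose_add_distrib fps_of_poly_pCons)

lemma fps_deriv_binomial_series:
  "fps_deriv (binomial_series c x) = fps_const (- (c * x)) * binomial_series (c - 1) x"
  by (simp add: binomial_series_def fps_compose_deriv fps_deriv_fps_binomial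
      fps_compose_mult_distrib mult.commute)

lemma prod_binomial_series_log_deriv:
  assumes "finite S"
  shows "(\<Prod>i\<in>S. binomial_series 1 (x i)) * fps_deriv (\<Prod>i\<in>S. binomial_series (c i) (x i))
    = (\<Prod>i\<in>S. binomial_series (c i) (x i))
      * (\<Sum>i\<in>S. fps_const (- (c i * x i)) * (\<Prod>j\<in>S - {i}. binomial_series 1 (x j)))"
  unfolding fps_deriv_prod[OF assms] sum_distrib_left
proof (rule sum.cong)
  fix i assume i: "i \<in> S"
  let ?E1 = "\<lambda>j. binomial_series 1 (x j)" and ?E = "\<lambda>j. binomial_series (c j) (x j)"
  have deriv: "?E1 i * fps_deriv (?E i) = fps_const (- (c i * x i)) * ?E i"
    by (simp add: fps_deriv_binomial_series mult.left_commute binomial_series_add)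
  have "prod ?E1 S * (fps_deriv (?E i) * prod ?E (S - {i}))
      = (?E1 i * fps_deriv (?E i)) * prod ?E1 (S - {i}) * prod ?E (S - {i})"
    unfolding prod.remove[OF assms i, of ?E1] by (simp only: ac_simps)
  also have "\<dots> = prod ?E S * (fps_const (- (c i * x i)) * prod ?E1 (S - {i}))"
    unfolding deriv prod.remove[OF assms i, of ?E] by (simp only: ac_simps)
  finally show "prod ?E1 S * (fps_deriv (?E i) * prod ?E (S - {i}))
      = prod ?E S * (fps_const (- (c i * x i)) * prod ?E1 (S - {i}))" .
qed simp

definition coeffs_bounded :: "('a::field \<Rightarrow> real) \<Rightarrow> (nat \<Rightarrow> real) \<Rightarrow> 'a fps \<Rightarrow> bool" where
  "coeffs_bounded v W F \<longleftrightarrow> (\<forall>n. v (F $ n) \<le> W n)"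

lemma nonarch_abs_fps_mult_nth_le:
  assumes v: "nonarch_abs v" and "0 \<le> M"
    and "\<And>i. i \<le> n \<Longrightarrow> v (F $ i) * v (G $ (n - i)) \<le> M"
  shows "v ((F * G) $ n) \<le> M"
  unfolding fps_mult_nth
proof (rule nonarch_abs_sum_le[OF v \<open>0 \<le> M\<close>])
  fix i assume "i \<in> {0..n}"
  then show "v (F $ i * G $ (n - i)) \<le> M"
    using assms(3)[of i] by (simp add: nonarch_abs_mult[OF v])
qed

lemma coeffs_bounded_mult:
  assumes v: "nonarch_abs v" and W: "\<And>n. 0 \<le> W n" "\<And>i j. W i * W j \<le> W (i + j)"
    and "coeffs_bounded v W F" "coeffs_bounded v W G"
  shows "coeffs_bounded v W (F * G)"
  unfolding coeffs_bounded_def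
proof
  fix n
  show "v ((F * G) $ n) \<le> W n"
  proof (rule nonarch_abs_fps_mult_nth_le[OF v W(1)])
    fix i assume "i \<le> n"
    have "v (F $ i) * v (G $ (n - i)) \<le> W i * W (n - i)"
      using assms(4,5) W(1) nonarch_abs_nonneg[OF v]
      unfolding coeffs_bounded_def by (intro mult_mono) auto
    also have "\<dots> \<le> W n"
      using W(2)[of i "n - i"] \<open>i \<le> n\<close> by simp
    finally show "v (F $ i) * v (G $ (n - i)) \<le> W n" .
  qed
qed

lemma coeffs_bounded_prod:
  assumes v: "nonarch_abs v" and W: "\<And>n. 0 \<le> W n" "\<And>i j. W i * W j \<le> W (i + j)" "1 \<le> W 0"
    and "\<And>i. i \<in> S \<Longrightarrow> coeffs_bounded v W (F i)"
  shows "coeffs_bounded v W (\<Prod>i\<in>S. F i)"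
proof -
  have "coeffs_bounded v W 1"
    unfolding coeffs_bounded_def using W(1,3) by (auto simp: fps_one_nth nonarch_abs_one[OF v] nonarch_abs_zero[OF v])
  with assms(5) show ?thesis
    by (induction S rule: infinite_finite_induct) (simp_all add: coeffs_bounded_mult[OF v W(1,2)])
qed

section \<open>The operator and its generating functions\<close>

locale fuchsian_operator =
  fixes m :: nat and a b :: "'a::field_char_0 poly" and \<alpha> :: "nat \<Rightarrow> 'a"
    and s :: "nat \<Rightarrow> rat" and bm :: rat
  assumes m_pos: "m > 0"
    and a_prod: "a = (\<Prod>i=1..m. [:- \<alpha> i, 1:])"
    and \<alpha>_inj: "inj_on \<alpha> {1..m}"
    and b_degree: "degree b \<le> m - 1"
    and s_eq: "\<And>i. i \<in> {1..m} \<Longrightarrow> of_rat (s i) = poly b (\<alpha> i) / poly (pderiv a) (\<alpha> i)"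
    and bm_eq: "of_rat bm = coeff b (m - 1)"
begin

definition cofactor :: "nat \<Rightarrow> 'a poly" where
  "cofactor i = (\<Prod>l\<in>{1..m} - {i}. [:- \<alpha> l, 1:])"

lemma degree_a: "degree a = m"
  unfolding a_prod by (subst degree_prod_eq_sum_degree) auto

lemma degree_cofactor: "i \<in> {1..m} \<Longrightarrow> degree (cofactor i) = m - 1"
  unfolding cofactor_def by (subst degree_prod_eq_sum_degree) auto

lemma coeff_cofactor_top: "i \<in> {1..m} \<Longrightarrow> coeff (cofactor i) (m - 1) = 1"
proof -
  have "lead_coeff (cofactor i) = 1"
    by (simp add: cofactor_def lead_coeff_prod)
  then show "i \<in> {1..m} \<Longrightarrow> ?thesis"
    by (simp add: degree_cofactor)
qed

lemma poly_cofactor_eq_0: "j \<in> {1..m} \<Longrightarrow> i \<noteq> j \<Longrightarrow> poly (cofactor i) (\<alpha> j) = 0"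
  unfolding cofactor_def by (auto simp: poly_prod prod_zero_iff)

lemma poly_cofactor_self: "i \<in> {1..m} \<Longrightarrow> poly (cofactor i) (\<alpha> i) \<noteq> 0"
  unfolding cofactor_def poly_prod using \<alpha>_inj by (auto dest: inj_onD)

lemma poly_sum_cofactor:
  "j \<in> {1..m} \<Longrightarrow> (\<Sum>i\<in>{1..m}. c i * poly (cofactor i) (\<alpha> j)) = c j * poly (cofactor j) (\<alpha> j)"
  by (subst sum.remove[of _ j]) (auto simp: poly_cofactor_eq_0 intro!: sum.neutral)

lemma poly_pderiv_a: "j \<in> {1..m} \<Longrightarrow> poly (pderiv a) (\<alpha> j) = poly (cofactor j) (\<alpha> j)"
  using poly_sum_cofactor[of j "\<lambda>_. 1"]
  by (simp add: a_prod pderiv_prod pderiv_pCons poly_sum cofactor_def)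

text \<open>Lagrange interpolation at the \<open>m\<close> distinct roots of \<open>a\<close>.\<close>
lemma b_eq_sum_cofactor: "b = (\<Sum>i\<in>{1..m}. smult (of_rat (s i)) (cofactor i))"
proof (rule poly_eqI_degree[where A = "\<alpha> ` {1..m}"])
  have card: "card (\<alpha> ` {1..m}) = m"
    using \<alpha>_inj by (simp add: card_image)
  then show "degree b < card (\<alpha> ` {1..m})"
    using b_degree m_pos by simp
  have "degree (\<Sum>i\<in>{1..m}. smult (of_rat (s i)) (cofactor i)) \<le> m - 1"
    by (intro degree_sum_le) (auto intro: order_trans[OF degree_smult_le] simp: degree_cofactor)
  then show "degree (\<Sum>i\<in>{1..m}. smult (of_rat (s i)) (cofactor i)) < card (\<alpha> ` {1..m})"
    using m_pos card by simp
  fix x assume "x \<in> \<alpha> ` {1..m}"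
  then obtain j where j: "j \<in> {1..m}" "x = \<alpha> j" by blast
  have "poly (\<Sum>i\<in>{1..m}. smult (of_rat (s i)) (cofactor i)) x
      = (\<Sum>i\<in>{1..m}. of_rat (s i) * poly (cofactor i) (\<alpha> j))"
    by (simp add: poly_sum j(2))
  also have "\<dots> = of_rat (s j) * poly (cofactor j) (\<alpha> j)"
    by (rule poly_sum_cofactor[OF j(1)])
  also have "\<dots> = poly b x"
    using s_eq[OF j(1)] poly_pderiv_a[OF j(1)] poly_cofactor_self[OF j(1)] j(2) by simp
  finally show "poly b x = poly (\<Sum>i\<in>{1..m}. smult (of_rat (s i)) (cofactor i)) x" ..
qed

lemma bm_eq_sum: "of_rat bm = (\<Sum>i\<in>{1..m}. of_rat (s i) :: 'a)"
proof -
  have "of_rat bm = (\<Sum>i\<in>{1..m}. of_rat (s i) * coeff (cofactor i) (m - 1))"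
    unfolding bm_eq by (subst b_eq_sum_cofactor) (simp add: coeff_sum)
  also have "\<dots> = (\<Sum>i\<in>{1..m}. of_rat (s i))"
    by (rule sum.cong[OF refl]) (metis coeff_cofactor_top mult_1_right)
  finally show ?thesis .
qed

text \<open>\<open>A\<close>, \<open>A_cofactor i\<close> and \<open>B\<close> are the reversals \<open>x\<^sup>m a(1/x)\<close>, \<open>x\<^sup>m\<^sup>-\<^sup>1 cofactor i (1/x)\<close> and
  \<open>x\<^sup>m\<^sup>-\<^sup>1 b(1/x)\<close>, see \<open>A_nth\<close>, \<open>A_cofactor_nth\<close>, \<open>B_nth\<close>.\<close>
definition A :: "'a fps" where "A = (\<Prod>i\<in>{1..m}. binomial_series 1 (\<alpha> i))"
definition A_cofactor :: "nat \<Rightarrow> 'a fps" where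
  "A_cofactor i = (\<Prod>l\<in>{1..m} - {i}. binomial_series 1 (\<alpha> l))"
definition B :: "'a fps" where "B = (\<Sum>i\<in>{1..m}. fps_const (of_rat (s i)) * A_cofactor i)"
definition Y :: "'a fps" where "Y = (\<Prod>i\<in>{1..m}. binomial_series (of_rat (s i)) (\<alpha> i))"
definition G :: "'a fps" where "G = (\<Prod>i\<in>{1..m}. binomial_series (- 1 - of_rat (s i)) (\<alpha> i))"

lemma Y_mult_G_mult_A: "Y * G * A = 1"
  by (simp add: Y_def G_def A_def binomial_series_add binomial_series_0 flip: prod.distrib)

lemma A_nth: "A $ j = (if j \<le> m then coeff a (m - j) else 0)"
proof -
  have "A = fps_of_poly (reflect_poly a)"
    by (simp add: A_def a_prod binomial_series_1 reflect_poly_prod fps_of_poly_prod reflect_poly_linear)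
  then show ?thesis
    by (simp add: coeff_reflect_poly degree_a)
qed

lemma A_cofactor_nth:
  "i \<in> {1..m} \<Longrightarrow> A_cofactor i $ j = (if j \<le> m - 1 then coeff (cofactor i) (m - 1 - j) else 0)"
proof -
  have "A_cofactor i = fps_of_poly (reflect_poly (cofactor i))"
    by (simp add: A_cofactor_def cofactor_def binomial_series_1 reflect_poly_prod fps_of_poly_prod reflect_poly_linear)
  then show "i \<in> {1..m} \<Longrightarrow> ?thesis"
    by (simp add: coeff_reflect_poly degree_cofactor)
qed

lemma B_nth: "B $ j = (if j \<le> m - 1 then coeff b (m - 1 - j) else 0)"
proof -
  have "B $ j = (\<Sum>i\<in>{1..m}. of_rat (s i) * A_cofactor i $ j)"
    by (simp add: B_def fps_sum_nth)
  also have "\<dots> = (\<Sum>i\<in>{1..m}. of_rat (s i) * (if j \<le> m - 1 then coeff (cofactor i) (m - 1 - j) else 0))"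
    using A_cofactor_nth by (intro sum.cong refl) auto
  also have "\<dots> = (if j \<le> m - 1 then coeff b (m - 1 - j) else 0)"
    by (subst b_eq_sum_cofactor) (simp add: coeff_sum)
  finally show ?thesis .
qed

lemma A_eq_mult_A_cofactor: "i \<in> {1..m} \<Longrightarrow> A = binomial_series 1 (\<alpha> i) * A_cofactor i"
  unfolding A_def A_cofactor_def by (rule prod.remove) auto

lemma Y_ode: "fps_XD Y * A + B * Y = fps_const (of_rat bm) * A * Y"
proof -
  define R where "R = (\<Sum>i\<in>{1..m}. fps_const (- (of_rat (s i) * \<alpha> i)) * A_cofactor i)"
  have log_deriv: "A * fps_deriv Y = Y * R"
    unfolding A_def Y_def R_def A_cofactor_def by (rule prod_binomial_series_log_deriv) simp
  have "fps_X * R + B = (\<Sum>i\<in>{1..m}. fps_const (of_rat (s i)) * (binomial_series 1 (\<alpha> i) * A_cofactor i))"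
    unfolding R_def B_def sum_distrib_left sum.distrib[symmetric]
    by (intro sum.cong refl) (simp add: binomial_series_1 fps_of_poly_pCons algebra_simps flip: fps_const_neg)
  also have "\<dots> = (\<Sum>i\<in>{1..m}. fps_const (of_rat (s i)) * A)"
    by (rule sum.cong[OF refl]) (metis A_eq_mult_A_cofactor)
  also have "\<dots> = fps_const (of_rat bm) * A"
    by (simp add: bm_eq_sum fps_const_sum sum_distrib_right)
  finally have R_B: "fps_X * R + B = fps_const (of_rat bm) * A" .
  have "fps_XD Y * A + B * Y = fps_X * (A * fps_deriv Y) + B * Y"
    by (simp add: fps_XD_def ac_simps)
  also have "\<dots> = Y * (fps_X * R + B)"
    by (simp add: log_deriv algebra_simps)
  finally show ?thesis
    unfolding R_B by (simp add: ac_simps)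
qed

end

locale fuchsian_solution = fuchsian_operator +
  fixes f :: "nat \<Rightarrow> 'a"
  assumes L_image: "L_image_poly a b f"
begin

text \<open>\<open>F(x) = f(1/x)\<close>; then \<open>L f = x\<^bsup>1-m\<^esup> \<Phi>(x)\<close>, so \<open>L f \<in> K[z]\<close> means \<open>\<Phi>\<close> is a polynomial of degree \<open>< m\<close>.\<close>
definition F :: "'a fps" where "F = Abs_fps (\<lambda>k. if k = 0 then 0 else f (k - 1))"
definition Phi :: "'a fps" where "Phi = A * fps_XD F + B * F"
definition J :: "'a fps" where "J = F * A * G"

lemma F_nth: "F $ k = (if k = 0 then 0 else f (k - 1))"
  by (simp add: F_def)

lemma A_XD_F_nth: "(A * fps_XD F) $ (N + m) = (\<Sum>j\<le>degree a. of_nat (j + N) * coeff a j * f (j + N - 1))"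
proof -
  have "(A * fps_XD F) $ (N + m) = (\<Sum>j\<le>m. A $ (m - j) * (of_nat (N + j) * F $ (N + j)))"
    by (subst fps_mult_nth_add_degree) (simp_all add: A_nth fps_XD_nth)
  also have "\<dots> = (\<Sum>j\<le>degree a. of_nat (j + N) * coeff a j * f (j + N - 1))"
    by (intro sum.cong) (auto simp: degree_a A_nth F_nth add.commute)
  finally show ?thesis .
qed

lemma B_F_nth: "(B * F) $ (N + m) = (\<Sum>j\<le>degree b. coeff b j * f (j + N))"
proof -
  have "(B * F) $ (N + m) = (B * F) $ (Suc N + (m - 1))"
    using m_pos by simp
  also have "\<dots> = (\<Sum>j\<le>m - 1. coeff b j * f (j + N))"
    by (subst fps_mult_nth_add_degree) (use m_pos in \<open>auto simp: B_nth F_nth add.commute intro!: sum.cong\<close>)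
  also have "\<dots> = (\<Sum>j\<le>degree b. coeff b j * f (j + N))"
    using b_degree by (intro sum.mono_neutral_right) (auto simp: coeff_eq_0)
  finally show ?thesis .
qed

lemma Phi_nth_eq_0: "n = 0 \<or> m \<le> n \<Longrightarrow> Phi $ n = 0"
proof (elim disjE)
  assume "m \<le> n"
  then obtain N where "n = N + m"
    by (metis add.commute le_add_diff_inverse)
  then have "Phi $ n = L_coeff a b f N"
    by (simp add: Phi_def L_coeff_def A_XD_F_nth B_F_nth)
  then show ?thesis
    using L_image by (simp add: L_image_poly_def)
qed (simp add: Phi_def fps_mult_nth F_nth)

lemma F_eq_Y_mult_J: "F = Y * J"
  using Y_mult_G_mult_A by (simp add: J_def algebra_simps)

lemma J_nth_0: "J $ 0 = 0"
  by (simp add: J_def fps_mult_nth F_nth)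

lemma G_Phi_nth: "(G * Phi) $ n = (of_rat bm + of_nat n) * J $ n"
proof -
  have "Phi = J * (fps_XD Y * A + B * Y) + A * Y * fps_XD J"
    unfolding Phi_def F_eq_Y_mult_J by (simp add: fps_XD_def algebra_simps)
  also have "\<dots> = A * Y * (fps_const (of_rat bm) * J + fps_XD J)"
    unfolding Y_ode by (simp add: algebra_simps)
  finally have "G * Phi = (Y * G * A) * (fps_const (of_rat bm) * J + fps_XD J)"
    by (simp add: algebra_simps)
  then have "G * Phi = fps_const (of_rat bm) * J + fps_XD J"
    by (simp only: Y_mult_G_mult_A mult_1)
  then show ?thesis
    by (simp add: fps_XD_nth algebra_simps)
qed

end

lemma height_v_ge_1: "1 \<le> height_v v m \<alpha>"
  unfolding height_v_def by (rule Max_ge) auto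

lemma height_v_ge: "i \<in> {1..m} \<Longrightarrow> v (\<alpha> i) \<le> height_v v m \<alpha>"
  unfolding height_v_def by (rule Max_ge) auto

context fuchsian_operator
begin

definition weight :: "('a \<Rightarrow> real) \<Rightarrow> nat \<Rightarrow> real" where
  "weight v n = height_v v m \<alpha> ^ n * (\<Prod>i=1..m. inverse (v (of_nat (mu n (s i)))))"

context
  fixes v :: "'a \<Rightarrow> real"
  assumes v: "nonarch_abs v"
begin

lemma inverse_mu_le_prod:
  assumes "i \<in> {1..m}"
  shows "inverse (v (of_nat (mu n (s i)))) \<le> (\<Prod>l=1..m. inverse (v (of_nat (mu n (s l)))))"
proof -
  let ?g = "\<lambda>l. inverse (v (of_nat (mu n (s l))))"
  have "1 \<le> (\<Prod>l\<in>{1..m} - {i}. ?g l)"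
    by (rule prod_ge_1) (simp add: one_le_inverse_nonarch_abs_mu[OF v])
  then have "?g i * 1 \<le> ?g i * (\<Prod>l\<in>{1..m} - {i}. ?g l)"
    using one_le_inverse_nonarch_abs_mu[OF v, of n "s i"] by (intro mult_left_mono) (simp_all add: nonarch_abs_nonneg[OF v])
  then show ?thesis
    using prod.remove[OF finite_atLeastAtMost assms, of ?g] by simp
qed

lemma weight_ge_1: "1 \<le> weight v n"
  unfolding weight_def using height_v_ge_1[of v m \<alpha>]
  by (intro mult_ge1_I one_le_power prod_ge_1) (simp_all add: one_le_inverse_nonarch_abs_mu[OF v])

lemma weight_mult_le: "weight v i * weight v j \<le> weight v (i + j)"
proof -
  let ?P = "\<lambda>n. \<Prod>l=1..m. inverse (v (of_nat (mu n (s l))))"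
  have "?P i * ?P j \<le> ?P (i + j)"
    unfolding prod.distrib[symmetric]
    by (intro prod_mono conjI inverse_nonarch_abs_mu_mult_le[OF v]) (simp_all add: nonarch_abs_nonneg[OF v])
  then have "height_v v m \<alpha> ^ (i + j) * (?P i * ?P j) \<le> height_v v m \<alpha> ^ (i + j) * ?P (i + j)"
    using height_v_ge_1[of v m \<alpha>] by (intro mult_left_mono) simp_all
  then show ?thesis
    by (simp add: weight_def power_add ac_simps)
qed

lemma weight_mono:
  assumes "i \<le> j"
  shows "weight v i \<le> weight v j"
proof -
  have "weight v i * 1 \<le> weight v i * weight v (j - i)"
    using weight_ge_1[of i] weight_ge_1[of "j - i"] by (intro mult_left_mono) simp_all
  also have "\<dots> \<le> weight v j"
    using weight_mult_le[of i "j - i"] assms by simp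
  finally show ?thesis by simp
qed

lemma coeffs_bounded_binomial_series:
  assumes i: "i \<in> {1..m}" and "\<And>n. mu n r = mu n (s i)"
  shows "coeffs_bounded v (weight v) (binomial_series (of_rat r) (\<alpha> i))"
  unfolding coeffs_bounded_def
proof
  fix n
  have "v (binomial_series (of_rat r) (\<alpha> i) $ n) = v (of_rat r gchoose n) * v (\<alpha> i) ^ n"
    by (simp add: binomial_series_nth nonarch_abs_mult[OF v] nonarch_abs_power[OF v] nonarch_abs_minus[OF v])
  also have "\<dots> \<le> inverse (v (of_nat (mu n (s i)))) * height_v v m \<alpha> ^ n"
    using nonarch_abs_gbinomial_le[OF v, of r n] assms(2)[of n] height_v_ge[OF i, of v]
    by (intro mult_mono power_mono) (simp_all add: nonarch_abs_nonneg[OF v])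
  also have "\<dots> \<le> weight v n"
    unfolding weight_def using inverse_mu_le_prod[OF i, of n] height_v_ge_1[of v m \<alpha>]
    by (simp add: mult.commute mult_left_mono)
  finally show "v (binomial_series (of_rat r) (\<alpha> i) $ n) \<le> weight v n" .
qed

lemma coeffs_bounded_weight_prod:
  "(\<And>i. i \<in> {1..m} \<Longrightarrow> coeffs_bounded v (weight v) (F i)) \<Longrightarrow>
    coeffs_bounded v (weight v) (\<Prod>i\<in>{1..m}. F i)"
  by (rule coeffs_bounded_prod[OF v]) (auto intro: order_trans[OF zero_le_one] weight_ge_1 weight_mult_le)

lemma coeffs_bounded_Y: "coeffs_bounded v (weight v) Y"
  unfolding Y_def by (rule coeffs_bounded_weight_prod, rule coeffs_bounded_binomial_series) simp_all

lemma coeffs_bounded_G: "coeffs_bounded v (weight v) G"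
proof -
  have exponent: "- 1 - of_rat (s i) = (of_rat (- 1 - s i) :: 'a)" for i
    by (simp add: of_rat_diff)
  show ?thesis
    unfolding G_def exponent
    by (rule coeffs_bounded_weight_prod, rule coeffs_bounded_binomial_series) (simp_all add: mu_minus_one_minus)
qed

end

end

context fuchsian_solution
begin

context
  fixes v :: "'a \<Rightarrow> real" and C :: real
  assumes v: "nonarch_abs v"
    and Phi_le: "\<And>u. v (Phi $ u) \<le> C" and J_1_le: "v (J $ 1) \<le> C"
    and bm_ok: "\<not> (bm \<in> \<int> \<and> bm < -1)"
begin

lemma bound_nonneg: "0 \<le> C"
  using Phi_le[of 0] Phi_nth_eq_0[of 0] by (simp add: nonarch_abs_zero[OF v])

lemma G_Phi_nth_le:
  assumes "1 \<le> t"
  shows "v ((G * Phi) $ t) \<le> C * weight v (t - 1)"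
proof (rule nonarch_abs_fps_mult_nth_le[OF v])
  show "0 \<le> C * weight v (t - 1)"
    using bound_nonneg weight_ge_1[OF v, of "t - 1"] by simp
  fix i assume "i \<le> t"
  show "v (G $ i) * v (Phi $ (t - i)) \<le> C * weight v (t - 1)"
  proof (cases "i = t")
    case True
    then show ?thesis
      using Phi_nth_eq_0[of 0] \<open>0 \<le> C * weight v (t - 1)\<close> by (simp add: nonarch_abs_zero[OF v])
  next
    case False
    then have "i \<le> t - 1"
      using \<open>i \<le> t\<close> by simp
    then have "v (G $ i) \<le> weight v (t - 1)"
      using coeffs_bounded_G[OF v] weight_mono[OF v, of i "t - 1"]
      unfolding coeffs_bounded_def by (meson order_trans)
    then have "v (G $ i) * v (Phi $ (t - i)) \<le> weight v (t - 1) * C"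
      using Phi_le[of "t - i"] bound_nonneg weight_ge_1[OF v, of "t - 1"]
      by (intro mult_mono) (simp_all add: nonarch_abs_nonneg[OF v])
    then show ?thesis
      by (simp add: mult.commute)
  qed
qed

lemma J_nth_le:
  assumes "1 \<le> t" and "t \<le> n + 1"
  shows "v (J $ t) \<le> C * weight v (t - 1) * inverse (v (of_nat (dn n bm)))"
proof (cases "of_rat bm + of_nat t = (0 :: 'a)")
  case True
  then have "of_rat (bm + of_nat t) = (0 :: 'a)"
    by (simp add: of_rat_add)
  then have "bm = - of_nat t"
    by (simp add: eq_neg_iff_add_eq_0)
  then have "t = 1"
    using bm_ok assms(1) by (cases "t \<ge> 2") auto
  have "1 \<le> weight v (t - 1) * inverse (v (of_nat (dn n bm)))"
    using weight_ge_1[OF v] one_le_inverse_nonarch_abs_of_nat[OF v dn_pos] by (intro mult_ge1_I)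
  then have "C * 1 \<le> C * (weight v (t - 1) * inverse (v (of_nat (dn n bm))))"
    using bound_nonneg by (intro mult_left_mono)
  then show ?thesis
    using J_1_le \<open>t = 1\<close> by (simp add: mult.assoc)
next
  case False
  then have "J $ t = (G * Phi) $ t * inverse (of_rat bm + of_nat t)"
    using G_Phi_nth[of t] by (simp add: field_simps)
  then have "v (J $ t) = v ((G * Phi) $ t) * v (inverse (of_rat bm + of_nat t))"
    by (simp add: nonarch_abs_mult[OF v])
  also have "\<dots> \<le> (C * weight v (t - 1)) * inverse (v (of_nat (dn n bm)))"
    using assms bound_nonneg weight_ge_1[OF v, of "t - 1"]
    by (intro mult_mono G_Phi_nth_le nonarch_abs_inverse_shift_le[OF v]) (simp_all add: nonarch_abs_nonneg[OF v])
  finally show ?thesis .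
qed

lemma Y_J_term_le:
  assumes "i \<le> k" and "k \<le> n"
  shows "v (Y $ i) * v (J $ (k + 1 - i)) \<le> C * weight v n * inverse (v (of_nat (dn n bm)))"
proof -
  let ?\<delta> = "inverse (v (of_nat (dn n bm)))"
  have t: "1 \<le> k + 1 - i" "k + 1 - i \<le> n + 1" "k + 1 - i - 1 = k - i"
    using assms by auto
  have "v (Y $ i) * v (J $ (k + 1 - i)) \<le> weight v i * (C * weight v (k - i) * ?\<delta>)"
    using coeffs_bounded_Y[OF v] J_nth_le[OF t(1,2)] weight_ge_1[OF v, of i]
    unfolding coeffs_bounded_def t(3) by (intro mult_mono) (simp_all add: nonarch_abs_nonneg[OF v])
  also have "\<dots> = C * (weight v i * weight v (k - i)) * ?\<delta>"
    by (simp add: ac_simps)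
  also have "\<dots> \<le> C * weight v n * ?\<delta>"
  proof -
    have "weight v i * weight v (k - i) \<le> weight v (i + (k - i))"
      by (rule weight_mult_le[OF v])
    also have "\<dots> \<le> weight v n"
      using assms by (intro weight_mono[OF v]) simp
    finally show ?thesis
      using bound_nonneg one_le_inverse_nonarch_abs_of_nat[OF v dn_pos]
      by (intro mult_right_mono mult_left_mono) (simp_all add: nonarch_abs_nonneg[OF v])
  qed
  finally show ?thesis .
qed

lemma f_le:
  assumes "k \<le> n"
  shows "v (f k) \<le> C * weight v n * inverse (v (of_nat (dn n bm)))"
proof -
  have "(Y * J) $ (k + 1) = f k"
    unfolding F_eq_Y_mult_J[symmetric] by (simp add: F_nth)
  moreover have "v ((Y * J) $ (k + 1)) \<le> C * weight v n * inverse (v (of_nat (dn n bm)))"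
  proof (rule nonarch_abs_fps_mult_nth_le[OF v])
    show nonneg: "0 \<le> C * weight v n * inverse (v (of_nat (dn n bm)))"
      using bound_nonneg weight_ge_1[OF v, of n]
      by (intro mult_nonneg_nonneg) (simp_all add: nonarch_abs_nonneg[OF v])
    fix i assume "i \<le> k + 1"
    then consider "i = k + 1" | "i \<le> k"
      by linarith
    then show "v (Y $ i) * v (J $ (k + 1 - i)) \<le> C * weight v n * inverse (v (of_nat (dn n bm)))"
    proof cases
      case 1
      then show ?thesis
        using J_nth_0 nonneg by (simp add: nonarch_abs_zero[OF v])
    next
      case 2
      then show ?thesis
        using Y_J_term_le assms by blast
    qed
  qed
  ultimately show ?thesis
    by simp
qed

end

lemma uniform_coeff_bound:
  assumes K: "number_field TYPE('a)" and bm_ok: "\<not> (bm \<in> \<int> \<and> bm < -1)"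
  shows "\<exists>D::nat. D > 0 \<and> (\<forall>v. nonarch_abs v \<longrightarrow> (\<forall>n k. k \<le> n \<longrightarrow>
           v (f k) \<le> inverse (v (of_nat D)) * weight v n * inverse (v (of_nat (dn n bm)))))"
proof -
  define X where "X = insert (J $ 1) ((\<lambda>u. Phi $ u) ` {..<m})"
  obtain D where "D > 0" and D: "\<And>v x. nonarch_abs v \<Longrightarrow> x \<in> X \<Longrightarrow> v (of_nat D * x) \<le> 1"
    using number_field_common_denominator[OF K, of X] by (auto simp: X_def)
  have "v (f k) \<le> inverse (v (of_nat D)) * weight v n * inverse (v (of_nat (dn n bm)))"
    if v: "nonarch_abs v" and "k \<le> n" for v n k
  proof (rule f_le[OF v _ _ bm_ok \<open>k \<le> n\<close>])
    have le: "v x \<le> inverse (v (of_nat D))" if "x \<in> X" for x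
      using D[OF v that] \<open>D > 0\<close> by (intro nonarch_abs_le_inverse[OF v]) simp_all
    then show "v (J $ 1) \<le> inverse (v (of_nat D))"
      by (simp add: X_def)
    show "v (Phi $ u) \<le> inverse (v (of_nat D))" for u
      using le[of "Phi $ u"] Phi_nth_eq_0[of u]
      by (cases "u < m") (simp_all add: X_def nonarch_abs_zero[OF v] nonarch_abs_nonneg[OF v])
  qed
  with \<open>D > 0\<close> show ?thesis
    by blast
qed

end

theorem lemma4p6:
  fixes m :: nat and a b :: "'a::field_char_0 poly" and \<alpha> :: "nat \<Rightarrow> 'a"
    and s :: "nat \<Rightarrow> rat" and bm :: rat and f :: "nat \<Rightarrow> 'a"
  assumes K: "number_field TYPE('a)"
    and m: "m \<ge> 2"
    and a_monic: "lead_coeff a = 1" and a_deg: "degree a = m"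
    and a_prod: "a = (\<Prod>i=1..m. [:- \<alpha> i, 1:])"
    and \<alpha>_dist: "inj_on \<alpha> {1..m}"
    and b_deg: "degree b \<le> m - 1"
    and s_def: "\<And>i. i \<in> {1..m} \<Longrightarrow> of_rat (s i) = poly b (\<alpha> i) / poly (pderiv a) (\<alpha> i)"
    and s_ok: "\<And>i. i \<in> {1..m} \<Longrightarrow> \<not> (s i \<in> \<int> \<and> s i \<le> -1)"
    and bm_def: "of_rat bm = coeff b (m - 1)"
    and bm_ok: "\<not> (bm \<in> \<int> \<and> bm < -1)"
    and Lf: "L_image_poly a b f"
  shows "\<exists>D::nat. D > 0 \<and>
    (\<forall>v::'a \<Rightarrow> real. nonarch_abs v \<longrightarrow> (\<forall>n::nat. n \<ge> 1 \<longrightarrow>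
       Max ((\<lambda>k. v (f k)) ` {0..n})
         \<le> inverse (v (of_nat D)) * height_v v m \<alpha> ^ n
            * (\<Prod>i=1..m. inverse (v (of_nat (mu n (s i)))))
            * inverse (v (of_nat (dn n bm)))))"
proof -
  interpret fuchsian_solution m a b \<alpha> s bm f
    using m a_prod \<alpha>_dist b_deg s_def bm_def Lf by unfold_locales auto
  obtain D where "D > 0" and D: "\<forall>v. nonarch_abs v \<longrightarrow> (\<forall>n k. k \<le> n \<longrightarrow>
      v (f k) \<le> inverse (v (of_nat D)) * weight v n * inverse (v (of_nat (dn n bm))))"
    using uniform_coeff_bound[OF K bm_ok] by blast
  show ?thesis
  proof (intro exI[of _ D] conjI allI impI)
    fix v :: "'a \<Rightarrow> real" and n :: nat
    assume "nonarch_abs v"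
    then show "Max ((\<lambda>k. v (f k)) ` {0..n})
         \<le> inverse (v (of_nat D)) * height_v v m \<alpha> ^ n
            * (\<Prod>i=1..m. inverse (v (of_nat (mu n (s i)))))
            * inverse (v (of_nat (dn n bm)))"
      using D by (intro Max.boundedI) (auto simp: weight_def mult.assoc)
  qed (rule \<open>D > 0\<close>)
qed

end
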